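(* Let $G=(V,E)$ be a connected graph with positive edge costs $c:E\to\mathbb{R}_+$, let $\alpha\ge1$, and let $(U,\complement{U})$ be an $\alpha$-approximate minimum cut of $G$. Let $\mathcal{C}=\{Q\subsetneq V:\complement{U}\subsetneq Q,\ d(Q)\le d(U)\}$ and suppose $\mathcal{C}\ne\emptyset$. Let $S\subseteq U$ be a minimal (with respect to inclusion) set such that $S\cap Q\ne\emptyset$ for all $Q\in\mathcal{C}$. Then $(U,\complement{U})$ is the unique minimum $(S,\complement{U})$-terminal cut.
   Context: A cut is a partition of $V$ into two non-empty parts; for $\emptyset\ne U\subsetneq V$ write $\complement{U}=V\setminus U$ and $d(U)$ for the total cost of edges with exactly one endpoint in $U$. Let $\lambda=\min\{d(U):\emptyset\ne U\subsetneq V\}$; $(U,\complement{U})$ is an $\alpha$-approximate minimum cut if $d(U)\le\alpha\lambda$. For disjoint non-empty $S,T\subseteq V$, a cut $(X,\complement{X})$ is an $(S,T)$-terminal cut if $S\subseteq X\subseteq V\setminus T$; a minimum $(S,T)$-terminal cut is one minimizing $d(X)$ among these. *)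

theory Defs
  imports Complex_Main
begin

text \<open>A finite undirected graph with positive edge costs is given by a finite vertex set V and a
symmetric cost function c; {u,v} is an edge iff c u v > 0 (non-edges have cost 0).\<close>

definition weighted_graph :: "'a set \<Rightarrow> ('a \<Rightarrow> 'a \<Rightarrow> real) \<Rightarrow> bool" where
  "weighted_graph V c \<longleftrightarrow> finite V \<and> (\<forall>u v. c u v = c v u) \<and> (\<forall>u v. c u v \<ge> 0)
     \<and> (\<forall>u. c u u = 0) \<and> (\<forall>u v. c u v > 0 \<longrightarrow> u \<in> V \<and> v \<in> V)"

definition adj :: "'a set \<Rightarrow> ('a \<Rightarrow> 'a \<Rightarrow> real) \<Rightarrow> 'a \<Rightarrow> 'a \<Rightarrow> bool" where
  "adj V c u v \<longleftrightarrow> u \<in> V \<and> v \<in> V \<and> c u v > 0"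

definition connected_graph :: "'a set \<Rightarrow> ('a \<Rightarrow> 'a \<Rightarrow> real) \<Rightarrow> bool" where
  "connected_graph V c \<longleftrightarrow> V \<noteq> {} \<and> (\<forall>u\<in>V. \<forall>v\<in>V. (adj V c)\<^sup>*\<^sup>* u v)"

definition cut_cost :: "'a set \<Rightarrow> ('a \<Rightarrow> 'a \<Rightarrow> real) \<Rightarrow> 'a set \<Rightarrow> real" where
  "cut_cost V c U = (\<Sum>u\<in>U. \<Sum>v\<in>V - U. c u v)"

definition is_cut :: "'a set \<Rightarrow> 'a set \<Rightarrow> bool" where
  "is_cut V U \<longleftrightarrow> U \<noteq> {} \<and> U \<subset> V"

definition min_cut_value :: "'a set \<Rightarrow> ('a \<Rightarrow> 'a \<Rightarrow> real) \<Rightarrow> real" where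
  "min_cut_value V c = Min (cut_cost V c ` {U. is_cut V U})"

definition approx_min_cut :: "'a set \<Rightarrow> ('a \<Rightarrow> 'a \<Rightarrow> real) \<Rightarrow> real \<Rightarrow> 'a set \<Rightarrow> bool" where
  "approx_min_cut V c \<alpha> U \<longleftrightarrow> is_cut V U \<and> cut_cost V c U \<le> \<alpha> * min_cut_value V c"

definition terminal_cut :: "'a set \<Rightarrow> 'a set \<Rightarrow> 'a set \<Rightarrow> 'a set \<Rightarrow> bool" where
  "terminal_cut V S T X \<longleftrightarrow> is_cut V X \<and> S \<subseteq> X \<and> X \<subseteq> V - T"

definition unique_min_terminal_cut ::
  "'a set \<Rightarrow> ('a \<Rightarrow> 'a \<Rightarrow> real) \<Rightarrow> 'a set \<Rightarrow> 'a set \<Rightarrow> 'a set \<Rightarrow> bool" where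
  "unique_min_terminal_cut V c S T X \<longleftrightarrow> terminal_cut V S T X \<and>
     (\<forall>Y. terminal_cut V S T Y \<and> Y \<noteq> X \<longrightarrow> cut_cost V c X < cut_cost V c Y)"

end

theory Submission
  imports Defs
begin

text \<open>If \<open>Y \<noteq> U\<close> were an \<open>(S, V - U)\<close>-terminal cut with \<open>d(Y) \<le> d(U)\<close>, then its complement
\<open>V - Y\<close> would strictly contain \<open>V - U\<close> and have the same cost as \<open>Y\<close>, so it would lie in \<open>\<C>\<close>;
but \<open>S \<subseteq> Y\<close> means that \<open>V - Y\<close> misses \<open>S\<close>, contradicting that \<open>S\<close> hits every member of \<open>\<C>\<close>.\<close>

lemma cut_cost_complement:
  assumes "\<And>u v. c u v = c v u" and "Y \<subseteq> V"
  shows "cut_cost V c (V - Y) = cut_cost V c Y"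
proof -
  have "cut_cost V c (V - Y) = (\<Sum>u\<in>V - Y. \<Sum>v\<in>Y. c u v)"
    using \<open>Y \<subseteq> V\<close> by (simp add: cut_cost_def double_diff)
  also have "\<dots> = (\<Sum>v\<in>Y. \<Sum>u\<in>V - Y. c u v)"
    by (rule sum.swap)
  also have "\<dots> = cut_cost V c Y"
    unfolding cut_cost_def using assms(1) by simp
  finally show ?thesis .
qed

lemma unique_min_terminal_cut_if_hitting:
  assumes sym: "\<And>u v. c u v = c v u"
    and cut: "is_cut V U"
    and "S \<subseteq> U"
    and hits: "\<And>Q. \<lbrakk>Q \<subset> V; V - U \<subset> Q; cut_cost V c Q \<le> cut_cost V c U\<rbrakk> \<Longrightarrow> S \<inter> Q \<noteq> {}"
  shows "unique_min_terminal_cut V c S (V - U) U"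
proof -
  have "cut_cost V c U < cut_cost V c Y"
    if Y: "terminal_cut V S (V - U) Y" and "Y \<noteq> U" for Y
  proof (rule ccontr)
    assume "\<not> cut_cost V c U < cut_cost V c Y"
    moreover have "Y \<subseteq> V"
      using Y by (auto simp: terminal_cut_def is_cut_def)
    ultimately have "cut_cost V c (V - Y) \<le> cut_cost V c U"
      using cut_cost_complement[of c Y V] sym by simp
    moreover have "V - Y \<subset> V" and "V - U \<subset> V - Y" and "S \<inter> (V - Y) = {}"
      using Y \<open>Y \<noteq> U\<close> cut by (auto simp: terminal_cut_def is_cut_def)
    ultimately show False
      using hits by blast
  qed
  moreover have "terminal_cut V S (V - U) U"
    using cut \<open>S \<subseteq> U\<close> by (auto simp: terminal_cut_def is_cut_def)
  ultimately show ?thesis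
    by (simp add: unique_min_terminal_cut_def)
qed

theorem proposition2p2:
  fixes V :: "'a set" and c :: "'a \<Rightarrow> 'a \<Rightarrow> real" and \<alpha> :: real
    and U S :: "'a set" and \<C> :: "'a set set"
  assumes "weighted_graph V c"
    and "connected_graph V c"
    and "\<alpha> \<ge> 1"
    and "approx_min_cut V c \<alpha> U"
    and "\<C> = {Q. Q \<subset> V \<and> V - U \<subset> Q \<and> cut_cost V c Q \<le> cut_cost V c U}"
    and "\<C> \<noteq> {}"
    and "S \<subseteq> U"
    and "\<forall>Q\<in>\<C>. S \<inter> Q \<noteq> {}"
    and "\<forall>S'. S' \<subset> S \<longrightarrow> \<not> (\<forall>Q\<in>\<C>. S' \<inter> Q \<noteq> {})"
  shows "unique_min_terminal_cut V c S (V - U) U"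
proof (rule unique_min_terminal_cut_if_hitting)
  show "\<And>u v. c u v = c v u"
    using \<open>weighted_graph V c\<close> by (simp add: weighted_graph_def)
  show "is_cut V U"
    using \<open>approx_min_cut V c \<alpha> U\<close> by (simp add: approx_min_cut_def)
  show "S \<subseteq> U" by fact
  show "S \<inter> Q \<noteq> {}"
    if "Q \<subset> V" "V - U \<subset> Q" "cut_cost V c Q \<le> cut_cost V c U" for Q
    using that assms(5,8) by blast
qed

end
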